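(* Let $G$ be a finite simple graph with an initial configuration $c_0:V(G)\to\mathbb{Z}$ and let $(c_t)_{t\ge0}$ be the configurations of the diffusion process. If a vertex $v$ is unbounded, then there exists $u\in N(v)$ that is also unbounded.
   Context: Diffusion process: $c_{t+1}(u)=c_t(u)-|\{w\in N(u): c_t(u)>c_t(w)\}|+|\{w\in N(u): c_t(u)<c_t(w)\}|$ for all $u$ simultaneously. A vertex $v$ is bounded if there exist integers $m\le M$ with $m\le c_t(v)\le M$ for all $t\ge0$, and unbounded otherwise. *)

theory Defs
  imports Main
begin

definition simple_graph :: "'a set \<Rightarrow> ('a \<Rightarrow> 'a \<Rightarrow> bool) \<Rightarrow> bool" where
  "simple_graph V E \<longleftrightarrow> finite V \<and> (\<forall>u v. E u v \<longrightarrow> u \<in> V \<and> v \<in> V)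
     \<and> (\<forall>u v. E u v \<longrightarrow> E v u) \<and> (\<forall>u. \<not> E u u)"

definition nbhd :: "'a set \<Rightarrow> ('a \<Rightarrow> 'a \<Rightarrow> bool) \<Rightarrow> 'a \<Rightarrow> 'a set" where
  "nbhd V E u = {w \<in> V. E u w}"

definition diffusion_step :: "'a set \<Rightarrow> ('a \<Rightarrow> 'a \<Rightarrow> bool) \<Rightarrow> ('a \<Rightarrow> int) \<Rightarrow> ('a \<Rightarrow> int)" where
  "diffusion_step V E c = (\<lambda>u. c u
      - int (card {w \<in> nbhd V E u. c u > c w})
      + int (card {w \<in> nbhd V E u. c u < c w}))"

fun diffusion :: "'a set \<Rightarrow> ('a \<Rightarrow> 'a \<Rightarrow> bool) \<Rightarrow> ('a \<Rightarrow> int) \<Rightarrow> nat \<Rightarrow> ('a \<Rightarrow> int)" where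
  "diffusion V E c0 0 = c0"
| "diffusion V E c0 (Suc t) = diffusion_step V E (diffusion V E c0 t)"

definition bounded_vertex :: "'a set \<Rightarrow> ('a \<Rightarrow> 'a \<Rightarrow> bool) \<Rightarrow> ('a \<Rightarrow> int) \<Rightarrow> 'a \<Rightarrow> bool" where
  "bounded_vertex V E c0 v \<longleftrightarrow>
     (\<exists>m M::int. m \<le> M \<and> (\<forall>t. m \<le> diffusion V E c0 t v \<and> diffusion V E c0 t v \<le> M))"

end

theory Submission
  imports Defs
begin

text \<open>If every neighbour of \<open>v\<close> stays in \<open>[-B, B]\<close>, then \<open>v\<close> moves by at most \<open>deg v\<close> per
  step, and once \<open>c\<^sub>t(v) > B\<close> no neighbour lies above it, so it cannot increase; hence
  \<open>c\<^sub>t(v) \<le> max c\<^sub>0(v) (B + deg v)\<close>. Symmetrically from below, so \<open>v\<close> is bounded.\<close>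

lemma finite_nbhd: "simple_graph V E \<Longrightarrow> finite (nbhd V E u)"
  by (simp add: simple_graph_def nbhd_def)

lemma diffusion_step_le:
  assumes "finite (nbhd V E u)"
  shows "diffusion_step V E c u \<le> c u + int (card (nbhd V E u))"
proof -
  have "card {w \<in> nbhd V E u. c u < c w} \<le> card (nbhd V E u)"
    using assms by (intro card_mono) auto
  then show ?thesis by (simp add: diffusion_step_def)
qed

lemma diffusion_step_ge:
  assumes "finite (nbhd V E u)"
  shows "c u - int (card (nbhd V E u)) \<le> diffusion_step V E c u"
proof -
  have "card {w \<in> nbhd V E u. c u > c w} \<le> card (nbhd V E u)"
    using assms by (intro card_mono) auto
  then show ?thesis by (simp add: diffusion_step_def)
qed

lemma diffusion_step_le_if_local_max:
  assumes "\<forall>w \<in> nbhd V E u. c w \<le> c u"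
  shows "diffusion_step V E c u \<le> c u"
proof -
  have "card {w \<in> nbhd V E u. c u < c w} = 0" using assms by (auto simp: card_eq_0_iff)
  then show ?thesis by (simp add: diffusion_step_def)
qed

lemma diffusion_step_ge_if_local_min:
  assumes "\<forall>w \<in> nbhd V E u. c u \<le> c w"
  shows "c u \<le> diffusion_step V E c u"
proof -
  have "card {w \<in> nbhd V E u. c u > c w} = 0" using assms by (auto simp: card_eq_0_iff)
  then show ?thesis by (simp add: diffusion_step_def)
qed

lemma bounded_above_if_bounded_drift:
  fixes x :: "nat \<Rightarrow> int"
  assumes drift: "\<And>t. x (Suc t) \<le> x t + d"
    and no_increase_above: "\<And>t. B < x t \<Longrightarrow> x (Suc t) \<le> x t"
  shows "x t \<le> max (x 0) (B + d)"
proof (induction t)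
  case (Suc t)
  then show ?case
    using drift[of t] no_increase_above[of t] by (cases "B < x t") auto
qed simp

lemma bounded_vertex_iff_abs_bounded:
  "bounded_vertex V E c0 u \<longleftrightarrow> (\<exists>B. \<forall>t. \<bar>diffusion V E c0 t u\<bar> \<le> B)"
proof
  assume "bounded_vertex V E c0 u"
  then obtain m M where mM: "\<forall>t. m \<le> diffusion V E c0 t u \<and> diffusion V E c0 t u \<le> M"
    unfolding bounded_vertex_def by blast
  have "\<bar>diffusion V E c0 t u\<bar> \<le> max \<bar>m\<bar> \<bar>M\<bar>" for t
    using mM[rule_format, of t] by linarith
  then show "\<exists>B. \<forall>t. \<bar>diffusion V E c0 t u\<bar> \<le> B" by blast
next
  assume "\<exists>B. \<forall>t. \<bar>diffusion V E c0 t u\<bar> \<le> B"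
  then obtain B where B: "\<forall>t. \<bar>diffusion V E c0 t u\<bar> \<le> B" ..
  have "-B \<le> diffusion V E c0 t u \<and> diffusion V E c0 t u \<le> B" for t
    using B[rule_format, of t] by linarith
  moreover have "-B \<le> B" using B[rule_format, of 0] by linarith
  ultimately show "bounded_vertex V E c0 u" unfolding bounded_vertex_def by blast
qed

lemma uniform_abs_bound:
  fixes f :: "'a \<Rightarrow> nat \<Rightarrow> int"
  assumes "finite N" "\<forall>u \<in> N. \<exists>B. \<forall>t. \<bar>f u t\<bar> \<le> B"
  shows "\<exists>B. \<forall>u \<in> N. \<forall>t. \<bar>f u t\<bar> \<le> B"
proof -
  from assms(2) obtain b where b: "\<forall>u \<in> N. \<forall>t. \<bar>f u t\<bar> \<le> b u"
    by (metis bchoice)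
  have "\<forall>u \<in> N. \<forall>t. \<bar>f u t\<bar> \<le> Max (b ` N)"
    using b assms(1) by (meson Max_ge finite_imageI image_eqI order_trans)
  then show ?thesis ..
qed

lemma diffusion_le_if_neighbours_le:
  assumes fin: "finite (nbhd V E v)"
    and nbhd_le: "\<forall>w \<in> nbhd V E v. \<forall>t. diffusion V E c0 t w \<le> B"
  shows "diffusion V E c0 t v \<le> max (c0 v) (B + int (card (nbhd V E v)))"
proof -
  let ?c = "diffusion V E c0"
  have "?c (Suc s) v \<le> ?c s v + int (card (nbhd V E v))" for s
    using diffusion_step_le[OF fin] by simp
  moreover have "?c (Suc s) v \<le> ?c s v" if "B < ?c s v" for s
  proof -
    have "\<forall>w \<in> nbhd V E v. ?c s w \<le> ?c s v"
      using nbhd_le that by (auto intro: order_trans[OF _ less_imp_le])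
    then show ?thesis by (simp add: diffusion_step_le_if_local_max)
  qed
  ultimately show ?thesis
    using bounded_above_if_bounded_drift[of "\<lambda>t. ?c t v"] by simp
qed

lemma diffusion_ge_if_neighbours_ge:
  assumes fin: "finite (nbhd V E v)"
    and nbhd_ge: "\<forall>w \<in> nbhd V E v. \<forall>t. b \<le> diffusion V E c0 t w"
  shows "min (c0 v) (b - int (card (nbhd V E v))) \<le> diffusion V E c0 t v"
proof -
  let ?c = "diffusion V E c0"
  have "- ?c (Suc s) v \<le> - ?c s v + int (card (nbhd V E v))" for s
    using diffusion_step_ge[OF fin, of "?c s"] by simp
  moreover have "- ?c (Suc s) v \<le> - ?c s v" if "- b < - ?c s v" for s
  proof -
    have "\<forall>w \<in> nbhd V E v. ?c s v \<le> ?c s w"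
      using nbhd_ge that by (auto intro: order_trans[OF less_imp_le])
    then show ?thesis by (simp add: diffusion_step_ge_if_local_min)
  qed
  ultimately have "- ?c t v \<le> max (- c0 v) (- b + int (card (nbhd V E v)))"
    using bounded_above_if_bounded_drift[where x = "\<lambda>t. - ?c t v" and B = "- b"] by simp
  then show ?thesis by linarith
qed

theorem lemma5:
  assumes "simple_graph V E"
    and "v \<in> V"
    and "\<not> bounded_vertex V E c0 v"
  shows "\<exists>u \<in> nbhd V E v. \<not> bounded_vertex V E c0 u"
proof (rule ccontr)
  let ?c = "diffusion V E c0"
  have fin: "finite (nbhd V E v)" using assms(1) by (rule finite_nbhd)
  assume "\<not> ?thesis"
  then have "\<forall>w \<in> nbhd V E v. \<exists>B. \<forall>t. \<bar>?c t w\<bar> \<le> B"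
    by (simp add: bounded_vertex_iff_abs_bounded)
  then obtain B where B: "\<forall>w \<in> nbhd V E v. \<forall>t. \<bar>?c t w\<bar> \<le> B"
    using uniform_abs_bound[OF fin, where f = "\<lambda>w t. ?c t w"] by blast
  have "\<forall>w \<in> nbhd V E v. \<forall>t. ?c t w \<le> B"
    using B by (fastforce dest: abs_le_D1)
  moreover have "\<forall>w \<in> nbhd V E v. \<forall>t. - B \<le> ?c t w"
    using B by (metis abs_le_D2 minus_le_iff)
  ultimately have "bounded_vertex V E c0 v"
    using diffusion_le_if_neighbours_le[OF fin] diffusion_ge_if_neighbours_ge[OF fin]
    unfolding bounded_vertex_def by (meson order_trans)
  with assms(3) show False ..
qed

end
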